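(* Let $$E=\begin{bmatrix} J_{k,a} & J_{k,b} & -J_{k,c} & -J_{k,d} & J_{k,e} & -J_{k,f} & 0 & 0 \\ -J_{k,a} & -J_{k,b} & J_{k,c} & J_{k,d} & -J_{k,e} & J_{k,f} & 0 & 0 \\ J_{l,a} & -J_{l,b} & J_{l,c} & -J_{l,d} & 0 & 0 & J_{l,g} & -J_{l,h} \\ -J_{l,a} & J_{l,b} & -J_{l,c} & J_{l,d} & 0 & 0 & -J_{l,g} & J_{l,h} \\ \end{bmatrix}$$ where any column index in each block is a nonnegative integer, and $k,l>0$, $a+b+c+d>0$, $e+f>0$, $g+h>0$, $E\mathbf{1}=0$ and $\mathbf{1}^TE=0^T$. Let \begin{align*} A=\begin{bmatrix} 0 & 0 & J_{k,c} & J_{k,d} & 0 & J_{k,f} & X_{11} & X_{12} \\ J_{k,a} & J_{k,b} & 0 & 0 & J_{k,e} & 0 & X_{21} & X_{22} \\ 0 & J_{l,b} & 0 & J_{l,d} & Y_{11} & Y_{12} & 0 & J_{l,h} \\ J_{l,a} & 0 & J_{l,c} & 0 & Y_{21} & Y_{22} & J_{l,g} & 0 \\ \end{bmatrix} \end{align*} where each block of $A$ is a $(0,1)$ matrix. Then, $A$ and $A+E$ are Gram mates if and only if the following conditions are satisfied: \begin{enumerate} \item $\mathbf{1}^TX_{1i}=\mathbf{1}^TX_{2i}$ and $\mathbf{1}^TY_{1i}=\mathbf{1}^TY_{2i}$ for $i=1,2$; \item $\begin{bmatrix} X_{11} & X_{12}\\ X_{21} & X_{22} \end{bmatrix}\begin{bmatrix}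 \mathbf{1}\\ -\mathbf{1} \end{bmatrix}=\frac{g-h}{2}\begin{bmatrix} \mathbf{1}\\ \mathbf{1} \end{bmatrix}$ and $\begin{bmatrix} Y_{11} & Y_{12}\\ Y_{21} & Y_{22} \end{bmatrix}\begin{bmatrix} \mathbf{1}\\ -\mathbf{1} \end{bmatrix}=\frac{e-f}{2}\begin{bmatrix} \mathbf{1}\\ \mathbf{1} \end{bmatrix}$ where $g-h$ and $e-f$ are even. \end{enumerate}
   Context: $J_{p,q}$ denotes the $p\times q$ all-ones matrix (absent if $p=0$ or $q=0$) and $\mathbf{1}$ an all-ones column vector of appropriate size. Two $(0,1)$ matrices $A\neq B$ are Gram mates if $AA^T=BB^T$ and $A^TA=B^TB$. *)

theory Defs
  imports "Jordan_Normal_Form.Matrix"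
begin

definition Jm :: "nat \<Rightarrow> nat \<Rightarrow> int mat" where
  "Jm p q = mat p q (\<lambda>_. 1)"

definition hcat :: "int mat \<Rightarrow> int mat \<Rightarrow> int mat" where
  "hcat A B = mat (dim_row A) (dim_col A + dim_col B)
     (\<lambda>(i,j). if j < dim_col A then A $$ (i,j) else B $$ (i, j - dim_col A))"

definition vcat :: "int mat \<Rightarrow> int mat \<Rightarrow> int mat" where
  "vcat A B = mat (dim_row A + dim_row B) (dim_col A)
     (\<lambda>(i,j). if i < dim_row A then A $$ (i,j) else B $$ (i - dim_row A, j))"

definition hcats :: "nat \<Rightarrow> int mat list \<Rightarrow> int mat" where
  "hcats r Bs = foldr hcat Bs (0\<^sub>m r 0)"

definition vcats :: "nat \<Rightarrow> int mat list \<Rightarrow> int mat" where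
  "vcats c Bs = foldr vcat Bs (0\<^sub>m 0 c)"

definition ones :: "nat \<Rightarrow> int vec" where
  "ones n = vec n (\<lambda>_. 1)"

definition zero_one_mat :: "int mat \<Rightarrow> bool" where
  "zero_one_mat A \<longleftrightarrow> (\<forall>i<dim_row A. \<forall>j<dim_col A. A $$ (i,j) \<in> {0,1})"

definition gram_mates :: "int mat \<Rightarrow> int mat \<Rightarrow> bool" where
  "gram_mates A B \<longleftrightarrow> zero_one_mat A \<and> zero_one_mat B \<and>
     dim_row A = dim_row B \<and> dim_col A = dim_col B \<and> A \<noteq> B \<and>
     A * transpose_mat A = B * transpose_mat B \<and>
     transpose_mat A * A = transpose_mat B * B"

end

theory Submission
  imports Defs
begin

(* Write S = A + B and E = B - A; then 2 (B B^T - A A^T) = S E^T + E S^T and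
   2 (B^T B - A^T A) = S^T E + E^T S.  Here E = x p^T + y q^T has rank two, where x, y are the
   sign patterns of the two pairs of row blocks and p, q those of the first and third block row
   of E.  Hence A^T A = B^T B iff the symmetric form p u^T + u p^T + q v^T + v q^T vanishes, with
   u = S^T x and v = S^T y.  These are twice the differences of the column sums of the X-blocks
   and of the Y-blocks; they have disjoint supports and vanish on the first column, where p and q
   do not, so the form vanishes iff u = v = 0, which is condition 1.
   Likewise A A^T = B B^T iff x U^T + U x^T + y V^T + V y^T vanishes, with U = S p and V = S q.
   Since E 1 = 0, V is supported on the first 2k rows, where it is 2 X [1; -1] - (g - h) 1, and U
   on the last 2l rows, where it is 2 Y [1; -1] - (e - f) 1.  The form then vanishes iff
   x_i V_i = c and y_j U_j = -c for a common constant c, and under condition 1 the identity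
   x^T V = x^T S q = u^T q = 0 forces c = 0, which is condition 2. *)

section \<open>Block matrices\<close>

lemma dim_hcat [simp]: "dim_row (hcat A B) = dim_row A" "dim_col (hcat A B) = dim_col A + dim_col B"
  by (simp_all add: hcat_def)

lemma dim_vcat [simp]: "dim_row (vcat A B) = dim_row A + dim_row B" "dim_col (vcat A B) = dim_col A"
  by (simp_all add: vcat_def)

lemma hcats_Nil [simp]: "hcats r [] = 0\<^sub>m r 0"
  and hcats_Cons [simp]: "hcats r (B # Bs) = hcat B (hcats r Bs)"
  by (simp_all add: hcats_def)

lemma vcats_Nil [simp]: "vcats c [] = 0\<^sub>m 0 c"
  and vcats_Cons [simp]: "vcats c (B # Bs) = vcat B (vcats c Bs)"
  by (simp_all add: vcats_def)

lemma dim_Jm [simp]: "dim_row (Jm p q) = p" "dim_col (Jm p q) = q"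
  by (simp_all add: Jm_def)

lemma row_hcat [simp]:
  "i < dim_row A \<Longrightarrow> dim_row B = dim_row A \<Longrightarrow> row (hcat A B) i = row A i @\<^sub>v row B i"
  by (rule eq_vecI) (auto simp: hcat_def)

lemma col_hcat [simp]:
  "j < dim_col A + dim_col B \<Longrightarrow> dim_row B = dim_row A \<Longrightarrow>
   col (hcat A B) j = (if j < dim_col A then col A j else col B (j - dim_col A))"
  by (rule eq_vecI) (auto simp: hcat_def)

lemma row_vcat [simp]:
  "i < dim_row A + dim_row B \<Longrightarrow> dim_col B = dim_col A \<Longrightarrow>
   row (vcat A B) i = (if i < dim_row A then row A i else row B (i - dim_row A))"
  by (rule eq_vecI) (auto simp: vcat_def)

lemma col_vcat [simp]:
  "j < dim_col A \<Longrightarrow> dim_col B = dim_col A \<Longrightarrow> col (vcat A B) j = col A j @\<^sub>v col B j"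
  by (rule eq_vecI) (auto simp: vcat_def)

lemma row_Jm [simp]: "i < p \<Longrightarrow> row (Jm p q) i = ones q"
  by (rule eq_vecI) (auto simp: Jm_def ones_def)

lemma col_Jm [simp]: "j < q \<Longrightarrow> col (Jm p q) j = ones p"
  by (rule eq_vecI) (auto simp: Jm_def ones_def)

lemma zero_one_mat_hcat:
  "zero_one_mat A \<Longrightarrow> zero_one_mat B \<Longrightarrow> dim_row B = dim_row A \<Longrightarrow> zero_one_mat (hcat A B)"
  by (auto simp: zero_one_mat_def hcat_def)

lemma zero_one_mat_vcat:
  "zero_one_mat A \<Longrightarrow> zero_one_mat B \<Longrightarrow> dim_col B = dim_col A \<Longrightarrow> zero_one_mat (vcat A B)"
  by (auto simp: zero_one_mat_def vcat_def)

lemma zero_one_mat_Jm: "zero_one_mat (Jm p q)"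
  by (simp add: zero_one_mat_def Jm_def)

lemma zero_one_mat_zero: "zero_one_mat (0\<^sub>m p q)"
  by (simp add: zero_one_mat_def)

lemmas zero_one_mat_blocks = zero_one_mat_hcat zero_one_mat_vcat zero_one_mat_Jm zero_one_mat_zero

lemma dim_ones [simp]: "dim_vec (ones n) = n"
  by (simp add: ones_def)

lemma index_ones [simp]: "i < n \<Longrightarrow> ones n $ i = 1"
  by (simp add: ones_def)

lemma ones_carrier [simp]: "ones n \<in> carrier_vec n"
  by (simp add: ones_def)

lemma scalar_prod_ones_ones [simp]: "ones n \<bullet> ones n = int n"
  by (simp add: ones_def scalar_prod_def)

lemma zero_vec_scalar_prod [simp]: "dim_vec v = n \<Longrightarrow> 0\<^sub>v n \<bullet> v = (0 :: 'a :: comm_semiring_0)"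
  and scalar_prod_zero_vec [simp]: "dim_vec v = n \<Longrightarrow> v \<bullet> 0\<^sub>v n = (0 :: 'a :: comm_semiring_0)"
  by (simp_all add: scalar_prod_def)

lemma append_vec_empty [simp]: "v @\<^sub>v vec 0 f = v"
  by (rule eq_vecI) auto

lemma scalar_prod_append_vec [simp]:
  "dim_vec v\<^sub>1 = dim_vec w\<^sub>1 \<Longrightarrow> dim_vec v\<^sub>2 = dim_vec w\<^sub>2 \<Longrightarrow>
   (v\<^sub>1 @\<^sub>v v\<^sub>2) \<bullet> (w\<^sub>1 @\<^sub>v w\<^sub>2) = v\<^sub>1 \<bullet> w\<^sub>1 + v\<^sub>2 \<bullet> w\<^sub>2"
  by (rule scalar_prod_append) (auto intro: carrier_vecI)

lemma smult_two_eq_smult_ones_iff: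
  fixes w :: "int vec"
  assumes "w \<in> carrier_vec N" "N > 0"
  shows "2 \<cdot>\<^sub>v w = z \<cdot>\<^sub>v ones N \<longleftrightarrow> even z \<and> w = (z div 2) \<cdot>\<^sub>v ones N"
proof
  assume "2 \<cdot>\<^sub>v w = z \<cdot>\<^sub>v ones N"
  then have w: "2 * w $ i = z" if "i < N" for i
    using that assms by (metis index_ones index_smult_vec dim_ones mult.right_neutral)
  then have "even z"
    using assms(2) by (metis dvd_triv_left)
  then show "even z \<and> w = (z div 2) \<cdot>\<^sub>v ones N"
    using w assms(1) by (auto simp: vec_eq_iff)
qed (use assms in \<open>auto simp: vec_eq_iff\<close>)

lemma all_less_add_iff: "(\<forall>i < p + q. P i) \<longleftrightarrow> (\<forall>i < p. P i) \<and> (\<forall>i < q. P (p + i))"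
  for p q :: nat
  by (metis add_diff_inverse_nat add_less_cancel_left trans_less_add1)

section \<open>Rank-two updates of Gram matrices\<close>

definition rank_two_mat :: "'a::comm_ring_1 vec \<Rightarrow> 'a vec \<Rightarrow> 'a vec \<Rightarrow> 'a vec \<Rightarrow> 'a mat" where
  "rank_two_mat x p y q = mat (dim_vec x) (dim_vec p) (\<lambda>(i, j). x $ i * p $ j + y $ i * q $ j)"

lemma dim_rank_two_mat [simp]:
  "dim_row (rank_two_mat x p y q) = dim_vec x" "dim_col (rank_two_mat x p y q) = dim_vec p"
  by (simp_all add: rank_two_mat_def)

lemma rank_two_mat_carrier [simp]:
  "x \<in> carrier_vec m \<Longrightarrow> p \<in> carrier_vec n \<Longrightarrow> rank_two_mat x p y q \<in> carrier_mat m n"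
  by (simp add: rank_two_mat_def)

lemma col_rank_two_mat:
  "j < dim_vec p \<Longrightarrow> dim_vec y = dim_vec x \<Longrightarrow> col (rank_two_mat x p y q) j = p $ j \<cdot>\<^sub>v x + q $ j \<cdot>\<^sub>v y"
  by (rule eq_vecI) (auto simp: rank_two_mat_def mult.commute)

lemma row_rank_two_mat:
  "i < dim_vec x \<Longrightarrow> dim_vec q = dim_vec p \<Longrightarrow> row (rank_two_mat x p y q) i = x $ i \<cdot>\<^sub>v p + y $ i \<cdot>\<^sub>v q"
  by (rule eq_vecI) (auto simp: rank_two_mat_def)

lemma transpose_rank_two_mat:
  "dim_vec y = dim_vec x \<Longrightarrow> dim_vec q = dim_vec p \<Longrightarrow>
   transpose_mat (rank_two_mat x p y q) = rank_two_mat p x q y"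
  by (rule eq_matI) (auto simp: rank_two_mat_def mult.commute)

lemma rank_two_mat_mult_vec:
  fixes x p y q w :: "'a::comm_ring_1 vec"
  assumes "p \<in> carrier_vec n" "q \<in> carrier_vec n" "w \<in> carrier_vec n" "dim_vec y = dim_vec x"
  shows "rank_two_mat x p y q *\<^sub>v w = (p \<bullet> w) \<cdot>\<^sub>v x + (q \<bullet> w) \<cdot>\<^sub>v y"
  using assms by (intro eq_vecI) (auto simp: row_rank_two_mat add_scalar_prod_distrib[of _ n] mult.commute)

(* Polarisation: (a + b) . (b' - a') + (b - a) . (a' + b') = 2 (b . b' - a . a'). *)
lemma scalar_prod_rank_two_update:
  fixes a a' x y :: "'a::comm_ring_1 vec"
  assumes "a \<in> carrier_vec N" "a' \<in> carrier_vec N" "x \<in> carrier_vec N" "y \<in> carrier_vec N"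
    and "b = a + (s \<cdot>\<^sub>v x + t \<cdot>\<^sub>v y)" "b' = a' + (s' \<cdot>\<^sub>v x + t' \<cdot>\<^sub>v y)"
  shows "2 * (b \<bullet> b' - a \<bullet> a') =
    s' * ((a + b) \<bullet> x) + t' * ((a + b) \<bullet> y) + s * ((a' + b') \<bullet> x) + t * ((a' + b') \<bullet> y)"
proof -
  have "2 * (b \<bullet> b' - a \<bullet> a') = (\<Sum>i<N. 2 * (b $ i * b' $ i - a $ i * a' $ i))"
    using assms by (simp add: scalar_prod_def sum_subtractf sum_distrib_left lessThan_atLeast0)
  also have "\<dots> = (\<Sum>i<N. s' * ((a $ i + b $ i) * x $ i) + t' * ((a $ i + b $ i) * y $ i)
      + s * ((a' $ i + b' $ i) * x $ i) + t * ((a' $ i + b' $ i) * y $ i))"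
    using assms by (intro sum.cong) (auto simp: algebra_simps)
  also have "\<dots> =
    s' * ((a + b) \<bullet> x) + t' * ((a + b) \<bullet> y) + s * ((a' + b') \<bullet> x) + t * ((a' + b') \<bullet> y)"
    using assms by (simp add: scalar_prod_def sum.distrib sum_distrib_left lessThan_atLeast0 mult.assoc)
  finally show ?thesis .
qed

lemma transpose_mult_rank_two_update_iff:
  fixes A :: "'a::{idom,ring_char_0} mat"
  assumes A: "A \<in> carrier_mat m n"
    and xy: "x \<in> carrier_vec m" "y \<in> carrier_vec m" and pq: "p \<in> carrier_vec n" "q \<in> carrier_vec n"
    and B: "B = A + rank_two_mat x p y q"
  defines "u \<equiv> transpose_mat (A + B) *\<^sub>v x" and "v \<equiv> transpose_mat (A + B) *\<^sub>v y"
  shows "transpose_mat A * A = transpose_mat B * B \<longleftrightarrow>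
    (\<forall>i<n. \<forall>j<n. p $ i * u $ j + u $ i * p $ j + q $ i * v $ j + v $ i * q $ j = 0)"
proof -
  have B_carrier: "B \<in> carrier_mat m n"
    using A xy pq B by auto
  have col_B: "col B j = col A j + (p $ j \<cdot>\<^sub>v x + q $ j \<cdot>\<^sub>v y)" if "j < n" for j
    using that A xy pq B by (simp add: col_rank_two_mat)
  have u: "u $ j = (col A j + col B j) \<bullet> x" and v: "v $ j = (col A j + col B j) \<bullet> y" if "j < n" for j
    using that A B_carrier by (simp_all add: u_def v_def)
  have "2 * ((transpose_mat B * B) $$ (i, j) - (transpose_mat A * A) $$ (i, j)) =
      p $ i * u $ j + u $ i * p $ j + q $ i * v $ j + v $ i * q $ j" if "i < n" "j < n" for i j
    using scalar_prod_rank_two_update[OF _ _ xy col_B[OF that(1)] col_B[OF that(2)]] that A B_carrier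
    by (simp add: u v algebra_simps)
  then show ?thesis
    using A B_carrier by (auto simp: mat_eq_iff)
qed

lemma mult_transpose_rank_two_update_iff:
  fixes A :: "'a::{idom,ring_char_0} mat"
  assumes A: "A \<in> carrier_mat m n"
    and xy: "x \<in> carrier_vec m" "y \<in> carrier_vec m" and pq: "p \<in> carrier_vec n" "q \<in> carrier_vec n"
    and B: "B = A + rank_two_mat x p y q"
  defines "U \<equiv> (A + B) *\<^sub>v p" and "V \<equiv> (A + B) *\<^sub>v q"
  shows "A * transpose_mat A = B * transpose_mat B \<longleftrightarrow>
    (\<forall>i<m. \<forall>j<m. x $ i * U $ j + U $ i * x $ j + y $ i * V $ j + V $ i * y $ j = 0)"
proof -
  have BT: "transpose_mat B = transpose_mat A + rank_two_mat p x q y"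
    using A xy pq B by (simp add: transpose_add transpose_rank_two_mat)
  have "transpose_mat A + transpose_mat B = transpose_mat (A + B)"
    using A xy pq B by (simp add: transpose_add)
  then show ?thesis
    using transpose_mult_rank_two_update_iff[OF _ pq xy BT] A
    by (simp add: U_def V_def)
qed

lemma rank_two_update_mult_vec:
  fixes A :: "'a::comm_ring_1 mat"
  assumes "A \<in> carrier_mat m n"
    and "x \<in> carrier_vec m" "y \<in> carrier_vec m" "p \<in> carrier_vec n" "q \<in> carrier_vec n"
    and "w \<in> carrier_vec n" "B = A + rank_two_mat x p y q" "i < m"
  shows "((A + B) *\<^sub>v w) $ i = 2 * (row A i \<bullet> w) + x $ i * (p \<bullet> w) + y $ i * (q \<bullet> w)"
proof -
  have "((A + B) *\<^sub>v w) $ i = (row A i + (row A i + (x $ i \<cdot>\<^sub>v p + y $ i \<cdot>\<^sub>v q))) \<bullet> w"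
    using assms by (simp add: row_rank_two_mat)
  then show ?thesis
    using assms by (simp add: add_scalar_prod_distrib[of _ n])
qed

lemma rank_two_update_transpose_mult_vec:
  fixes A :: "'a::comm_ring_1 mat"
  assumes "A \<in> carrier_mat m n"
    and "x \<in> carrier_vec m" "y \<in> carrier_vec m" "p \<in> carrier_vec n" "q \<in> carrier_vec n"
    and "z \<in> carrier_vec m" "B = A + rank_two_mat x p y q" "j < n"
  shows "(transpose_mat (A + B) *\<^sub>v z) $ j = 2 * (col A j \<bullet> z) + p $ j * (x \<bullet> z) + q $ j * (y \<bullet> z)"
proof -
  have "transpose_mat (A + B) = transpose_mat A + (transpose_mat A + rank_two_mat p x q y)"
    using assms by (simp add: transpose_add transpose_rank_two_mat)
  then show ?thesis
    using rank_two_update_mult_vec[of "transpose_mat A" n m p q x y z] assms by simp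
qed

lemma rank_two_form_eq_0_iff_of_common_zero:
  fixes p q u v :: "nat \<Rightarrow> 'a::idom"
  assumes supp: "\<And>i. i < n \<Longrightarrow> u i = 0 \<or> v i = 0"
    and j\<^sub>0: "j\<^sub>0 < n" "p j\<^sub>0 \<noteq> 0" "q j\<^sub>0 \<noteq> 0" "u j\<^sub>0 = 0" "v j\<^sub>0 = 0"
  shows "(\<forall>i<n. \<forall>j<n. p i * u j + u i * p j + q i * v j + v i * q j = 0) \<longleftrightarrow>
    (\<forall>i<n. u i = 0 \<and> v i = 0)"
proof
  assume form: "\<forall>i<n. \<forall>j<n. p i * u j + u i * p j + q i * v j + v i * q j = 0"
  show "\<forall>i<n. u i = 0 \<and> v i = 0"
  proof (intro allI impI)
    fix i assume i: "i < n"
    have "u i * p j\<^sub>0 + v i * q j\<^sub>0 = 0"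
      using form i j\<^sub>0 by force
    then show "u i = 0 \<and> v i = 0"
      using supp[OF i] j\<^sub>0 by auto
  qed
qed simp

lemma rank_two_form_eq_0_iff_of_disjoint_supports:
  fixes x y U V :: "nat \<Rightarrow> 'a::linordered_idom"
  assumes split: "\<And>i. i < m \<Longrightarrow>
      (x i \<in> {-1, 1} \<and> y i = 0 \<and> U i = 0) \<or> (y i \<in> {-1, 1} \<and> x i = 0 \<and> V i = 0)"
    and i\<^sub>0: "i\<^sub>0 < m" "x i\<^sub>0 \<noteq> 0" and j\<^sub>0: "j\<^sub>0 < m" "y j\<^sub>0 \<noteq> 0"
    and sum_xV: "(\<Sum>i<m. x i * V i) = 0"
  shows "(\<forall>i<m. \<forall>j<m. x i * U j + U i * x j + y i * V j + V i * y j = 0) \<longleftrightarrow>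
    (\<forall>i<m. U i = 0 \<and> V i = 0)"
proof
  assume form: "\<forall>i<m. \<forall>j<m. x i * U j + U i * x j + y i * V j + V i * y j = 0"
  have y_j\<^sub>0: "y j\<^sub>0 \<in> {-1, 1}" "x j\<^sub>0 = 0" "V j\<^sub>0 = 0"
    using split[OF j\<^sub>0(1)] j\<^sub>0(2) by auto
  have x_i\<^sub>0: "x i\<^sub>0 \<in> {-1, 1}" "y i\<^sub>0 = 0" "U i\<^sub>0 = 0"
    using split[OF i\<^sub>0(1)] i\<^sub>0(2) by auto
  define c where "c = y j\<^sub>0 * U j\<^sub>0"
  have xV: "x i * V i = - c * x i ^ 2" if i: "i < m" for i
  proof (cases "x i = 0")
    case False
    then have "x i \<in> {-1, 1}" "y i = 0" "U i = 0"
      using split[OF i] by auto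
    moreover have "x i * U j\<^sub>0 + V i * y j\<^sub>0 = 0"
      using form i j\<^sub>0(1) y_j\<^sub>0 \<open>y i = 0\<close> \<open>U i = 0\<close> by force
    ultimately show ?thesis
      using y_j\<^sub>0(1) by (auto simp: c_def power2_eq_square algebra_simps)
  qed simp
  have "(\<Sum>i<m. x i ^ 2) > 0"
    using i\<^sub>0 by (intro sum_pos2[of _ i\<^sub>0]) auto
  moreover have "- c * (\<Sum>i<m. x i ^ 2) = 0"
    using sum_xV xV by (simp add: sum_distrib_left)
  ultimately have "U j\<^sub>0 = 0"
    using y_j\<^sub>0(1) by (auto simp: c_def)
  then have V: "V i = 0" if "i < m" for i
    using xV[OF that] split[OF that] by (auto simp: c_def)
  have U: "U j = 0" if "j < m" for j
  proof -
    have "x i\<^sub>0 * U j = 0"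
      using form i\<^sub>0(1) that x_i\<^sub>0 V[OF i\<^sub>0(1)] V[OF that] split[OF that] by force
    then show ?thesis
      using i\<^sub>0(2) by simp
  qed
  show "\<forall>i<m. U i = 0 \<and> V i = 0"
    using U V by blast
qed simp

section \<open>The block configuration\<close>

locale gram_mate_blocks =
  fixes k l a b c d e f g h :: nat
    and X11 X12 X21 X22 Y11 Y12 Y21 Y22 :: "int mat"
  assumes X_carrier: "X11 \<in> carrier_mat k g" "X12 \<in> carrier_mat k h"
      "X21 \<in> carrier_mat k g" "X22 \<in> carrier_mat k h"
    and Y_carrier: "Y11 \<in> carrier_mat l e" "Y12 \<in> carrier_mat l f"
      "Y21 \<in> carrier_mat l e" "Y22 \<in> carrier_mat l f"
    and zero_one_blocks: "zero_one_mat X11" "zero_one_mat X12" "zero_one_mat X21" "zero_one_mat X22"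
      "zero_one_mat Y11" "zero_one_mat Y12" "zero_one_mat Y21" "zero_one_mat Y22"
begin

abbreviation ncols :: nat where
  "ncols \<equiv> a + b + c + d + e + f + g + h"

abbreviation nrows :: nat where
  "nrows \<equiv> 2 * k + 2 * l"

definition A :: "int mat" where
  "A = vcats ncols
     [hcats k [0\<^sub>m k a, 0\<^sub>m k b, Jm k c, Jm k d, 0\<^sub>m k e, Jm k f, X11, X12],
      hcats k [Jm k a, Jm k b, 0\<^sub>m k c, 0\<^sub>m k d, Jm k e, 0\<^sub>m k f, X21, X22],
      hcats l [0\<^sub>m l a, Jm l b, 0\<^sub>m l c, Jm l d, Y11, Y12, 0\<^sub>m l g, Jm l h],
      hcats l [Jm l a, 0\<^sub>m l b, Jm l c, 0\<^sub>m l d, Y21, Y22, Jm l g, 0\<^sub>m l h]]"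

definition E :: "int mat" where
  "E = vcats ncols
     [hcats k [Jm k a, Jm k b, - Jm k c, - Jm k d, Jm k e, - Jm k f, 0\<^sub>m k g, 0\<^sub>m k h],
      hcats k [- Jm k a, - Jm k b, Jm k c, Jm k d, - Jm k e, Jm k f, 0\<^sub>m k g, 0\<^sub>m k h],
      hcats l [Jm l a, - Jm l b, Jm l c, - Jm l d, 0\<^sub>m l e, 0\<^sub>m l f, Jm l g, - Jm l h],
      hcats l [- Jm l a, Jm l b, - Jm l c, Jm l d, 0\<^sub>m l e, 0\<^sub>m l f, - Jm l g, Jm l h]]"

abbreviation B :: "int mat" where
  "B \<equiv> A + E"

definition xE :: "int vec" where
  "xE = ones k @\<^sub>v - ones k @\<^sub>v 0\<^sub>v l @\<^sub>v 0\<^sub>v l"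

definition yE :: "int vec" where
  "yE = 0\<^sub>v k @\<^sub>v 0\<^sub>v k @\<^sub>v ones l @\<^sub>v - ones l"

definition pE :: "int vec" where
  "pE = ones a @\<^sub>v ones b @\<^sub>v - ones c @\<^sub>v - ones d @\<^sub>v ones e @\<^sub>v - ones f @\<^sub>v 0\<^sub>v g @\<^sub>v 0\<^sub>v h"

definition qE :: "int vec" where
  "qE = ones a @\<^sub>v - ones b @\<^sub>v ones c @\<^sub>v - ones d @\<^sub>v 0\<^sub>v e @\<^sub>v 0\<^sub>v f @\<^sub>v ones g @\<^sub>v - ones h"

definition X_row_diff :: "int vec" where
  "X_row_diff = vcats (g + h) [hcats k [X11, X12], hcats k [X21, X22]] *\<^sub>v (ones g @\<^sub>v - ones h)"

definition Y_row_diff :: "int vec" where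
  "Y_row_diff = vcats (e + f) [hcats l [Y11, Y12], hcats l [Y21, Y22]] *\<^sub>v (ones e @\<^sub>v - ones f)"

definition equal_column_sums :: bool where
  "equal_column_sums \<longleftrightarrow>
     transpose_mat X11 *\<^sub>v ones k = transpose_mat X21 *\<^sub>v ones k \<and>
     transpose_mat X12 *\<^sub>v ones k = transpose_mat X22 *\<^sub>v ones k \<and>
     transpose_mat Y11 *\<^sub>v ones l = transpose_mat Y21 *\<^sub>v ones l \<and>
     transpose_mat Y12 *\<^sub>v ones l = transpose_mat Y22 *\<^sub>v ones l"

lemma block_dims [simp]:
  "dim_row X11 = k" "dim_col X11 = g" "dim_row X12 = k" "dim_col X12 = h"
  "dim_row X21 = k" "dim_col X21 = g" "dim_row X22 = k" "dim_col X22 = h"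
  "dim_row Y11 = l" "dim_col Y11 = e" "dim_row Y12 = l" "dim_col Y12 = f"
  "dim_row Y21 = l" "dim_col Y21 = e" "dim_row Y22 = l" "dim_col Y22 = f"
  using X_carrier Y_carrier by auto

lemma A_carrier: "A \<in> carrier_mat nrows ncols"
  by (rule carrier_matI) (simp_all add: A_def)

lemma E_carrier: "E \<in> carrier_mat nrows ncols"
  by (rule carrier_matI) (simp_all add: E_def)

lemma sign_vec_carrier:
  "xE \<in> carrier_vec nrows" "yE \<in> carrier_vec nrows"
  "pE \<in> carrier_vec ncols" "qE \<in> carrier_vec ncols"
  by (auto intro!: carrier_vecI simp: xE_def yE_def pE_def qE_def)

lemma E_eq_rank_two_mat: "E = rank_two_mat xE pE yE qE"
proof (rule eq_matI)
  show "dim_row E = dim_row (rank_two_mat xE pE yE qE)" "dim_col E = dim_col (rank_two_mat xE pE yE qE)"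
    using E_carrier sign_vec_carrier by simp_all
  have "\<forall>i < k + k + (l + l). \<forall>j < ncols.
    E $$ (i, j) = xE $ i * pE $ j + yE $ i * qE $ j"
    unfolding all_less_add_iff
    by (simp add: E_def xE_def yE_def pE_def qE_def hcat_def vcat_def Jm_def)
  then show "E $$ (i, j) = rank_two_mat xE pE yE qE $$ (i, j)"
    if "i < dim_row (rank_two_mat xE pE yE qE)" "j < dim_col (rank_two_mat xE pE yE qE)" for i j
    using that sign_vec_carrier by (simp add: rank_two_mat_def mult_2)
qed

lemma E_mult_ones_eq_0_iff:
  assumes "k > 0" "l > 0"
  shows "E *\<^sub>v ones ncols = 0\<^sub>v nrows \<longleftrightarrow>
    a + b + e = c + d + f \<and> a + c + g = b + d + h"
proof -
  have ones_blocks: "ones ncols =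
      ones a @\<^sub>v ones b @\<^sub>v ones c @\<^sub>v ones d @\<^sub>v ones e @\<^sub>v ones f @\<^sub>v ones g @\<^sub>v ones h"
    by (rule eq_vecI) simp_all
  have "pE \<bullet> ones ncols = int a + int b - int c - int d + int e - int f"
    and "qE \<bullet> ones ncols = int a - int b + int c - int d + int g - int h"
    by (simp_all add: pE_def qE_def ones_blocks)
  then have E_ones: "E *\<^sub>v ones ncols =
      (int a + int b - int c - int d + int e - int f) \<cdot>\<^sub>v xE + (int a - int b + int c - int d + int g - int h) \<cdot>\<^sub>v yE"
    using sign_vec_carrier by (simp add: E_eq_rank_two_mat rank_two_mat_mult_vec[of _ ncols])
  show ?thesis
  proof
    assume "E *\<^sub>v ones ncols = 0\<^sub>v nrows"
    then have "(E *\<^sub>v ones ncols) $ 0 = 0"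
      and "(E *\<^sub>v ones ncols) $ (2 * k) = 0"
      using assms by simp_all
    then show "a + b + e = c + d + f \<and> a + c + g = b + d + h"
      using assms sign_vec_carrier by (simp add: E_ones xE_def yE_def)
  next
    assume "a + b + e = c + d + f \<and> a + c + g = b + d + h"
    then have "int a + int b - int c - int d + int e - int f = 0"
      and "int a - int b + int c - int d + int g - int h = 0"
      by linarith+
    then show "E *\<^sub>v ones ncols = 0\<^sub>v nrows"
      using sign_vec_carrier by (simp add: E_ones vec_eq_iff)
  qed
qed

lemma B_eq_blocks:
  "B = vcats ncols
     [hcats k [Jm k a, Jm k b, 0\<^sub>m k c, 0\<^sub>m k d, Jm k e, 0\<^sub>m k f, X11, X12],
      hcats k [0\<^sub>m k a, 0\<^sub>m k b, Jm k c, Jm k d, 0\<^sub>m k e, Jm k f, X21, X22],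
      hcats l [Jm l a, 0\<^sub>m l b, Jm l c, 0\<^sub>m l d, Y11, Y12, Jm l g, 0\<^sub>m l h],
      hcats l [0\<^sub>m l a, Jm l b, 0\<^sub>m l c, Jm l d, Y21, Y22, 0\<^sub>m l g, Jm l h]]"
    (is "_ = ?blocks")
proof (rule eq_matI)
  have "\<forall>i < k + k + (l + l). \<forall>j < ncols. B $$ (i, j) = ?blocks $$ (i, j)"
    unfolding all_less_add_iff using A_carrier E_carrier
    by (simp add: A_def E_def hcat_def vcat_def Jm_def)
  then show "B $$ (i, j) = ?blocks $$ (i, j)" if "i < dim_row ?blocks" "j < dim_col ?blocks" for i j
    using that by simp
qed (use A_carrier E_carrier in simp_all)

lemma zero_one_mat_A: "zero_one_mat A"
  unfolding A_def using zero_one_blocks by (simp add: zero_one_mat_blocks)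

lemma zero_one_mat_B: "zero_one_mat B"
  unfolding B_eq_blocks using zero_one_blocks by (simp add: zero_one_mat_blocks)

lemma sign_vecs_at_0:
  assumes "a + b + c + d > 0"
  shows "pE $ 0 \<in> {-1, 1}" "qE $ 0 \<in> {-1, 1}"
  unfolding pE_def qE_def using assms by (cases "a > 0"; cases "b > 0"; cases "c > 0"; simp)+

lemma A_neq_B:
  assumes "k > 0" "a + b + c + d > 0"
  shows "A \<noteq> B"
proof
  assume "A = B"
  moreover have "B $$ (0, 0) = A $$ (0, 0) + pE $ 0"
    using assms A_carrier sign_vec_carrier
    by (simp add: E_eq_rank_two_mat rank_two_mat_def xE_def yE_def)
  ultimately show False
    using sign_vecs_at_0(1)[OF assms(2)] by auto
qed

lemma transpose_A_plus_B_mult_vec: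
  assumes "z \<in> carrier_vec nrows" "j < ncols"
  shows "(transpose_mat (A + B) *\<^sub>v z) $ j = 2 * (col A j \<bullet> z) + pE $ j * (xE \<bullet> z) + qE $ j * (yE \<bullet> z)"
  using rank_two_update_transpose_mult_vec[OF A_carrier sign_vec_carrier assms(1) _ assms(2)]
  by (simp add: E_eq_rank_two_mat)

lemma A_plus_B_mult_vec:
  assumes "w \<in> carrier_vec ncols" "i < nrows"
  shows "((A + B) *\<^sub>v w) $ i = 2 * (row A i \<bullet> w) + xE $ i * (pE \<bullet> w) + yE $ i * (qE \<bullet> w)"
  using rank_two_update_mult_vec[OF A_carrier sign_vec_carrier assms(1) _ assms(2)]
  by (simp add: E_eq_rank_two_mat)

lemma transpose_A_plus_B_mult_xE:
  "transpose_mat (A + B) *\<^sub>v xE = 0\<^sub>v (a + b + c + d + e + f)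
     @\<^sub>v 2 \<cdot>\<^sub>v (transpose_mat X11 *\<^sub>v ones k - transpose_mat X21 *\<^sub>v ones k)
     @\<^sub>v 2 \<cdot>\<^sub>v (transpose_mat X12 *\<^sub>v ones k - transpose_mat X22 *\<^sub>v ones k)"
    (is "_ = ?rhs")
proof (rule eq_vecI)
  have entries: "\<forall>j < ncols.
    2 * (col A j \<bullet> xE) + pE $ j * (xE \<bullet> xE) + qE $ j * (yE \<bullet> xE) = ?rhs $ j"
    unfolding all_less_add_iff by (simp add: A_def xE_def yE_def pE_def qE_def)
  show "(transpose_mat (A + B) *\<^sub>v xE) $ j = ?rhs $ j" if "j < dim_vec ?rhs" for j
  proof -
    have j: "j < ncols"
      using that by simp
    show ?thesis
      unfolding transpose_A_plus_B_mult_vec[OF sign_vec_carrier(1) j] using entries j by blast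
  qed
qed (use A_carrier E_carrier in simp)

lemma transpose_A_plus_B_mult_yE:
  "transpose_mat (A + B) *\<^sub>v yE = 0\<^sub>v (a + b + c + d)
     @\<^sub>v 2 \<cdot>\<^sub>v (transpose_mat Y11 *\<^sub>v ones l - transpose_mat Y21 *\<^sub>v ones l)
     @\<^sub>v 2 \<cdot>\<^sub>v (transpose_mat Y12 *\<^sub>v ones l - transpose_mat Y22 *\<^sub>v ones l)
     @\<^sub>v 0\<^sub>v (g + h)"
    (is "_ = ?rhs")
proof (rule eq_vecI)
  have entries: "\<forall>j < ncols.
    2 * (col A j \<bullet> yE) + pE $ j * (xE \<bullet> yE) + qE $ j * (yE \<bullet> yE) = ?rhs $ j"
    unfolding all_less_add_iff by (simp add: A_def xE_def yE_def pE_def qE_def)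
  show "(transpose_mat (A + B) *\<^sub>v yE) $ j = ?rhs $ j" if "j < dim_vec ?rhs" for j
  proof -
    have j: "j < ncols"
      using that by simp
    show ?thesis
      unfolding transpose_A_plus_B_mult_vec[OF sign_vec_carrier(2) j] using entries j by blast
  qed
qed (use A_carrier E_carrier in simp)

lemma transpose_A_plus_B_mult_xE_yE_eq_0_iff:
  "(\<forall>j < ncols.
      (transpose_mat (A + B) *\<^sub>v xE) $ j = 0 \<and> (transpose_mat (A + B) *\<^sub>v yE) $ j = 0) \<longleftrightarrow>
    equal_column_sums"
  unfolding transpose_A_plus_B_mult_xE transpose_A_plus_B_mult_yE equal_column_sums_def all_less_add_iff
  by (auto simp: vec_eq_iff)

lemma transpose_gram_eq_iff:
  assumes "a + b + c + d > 0"
  shows "transpose_mat A * A = transpose_mat B * B \<longleftrightarrow> equal_column_sums"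
proof -
  define u where "u = transpose_mat (A + B) *\<^sub>v xE"
  define v where "v = transpose_mat (A + B) *\<^sub>v yE"
  have B: "B = A + rank_two_mat xE pE yE qE"
    by (simp add: E_eq_rank_two_mat)
  have "transpose_mat A * A = transpose_mat B * B \<longleftrightarrow>
      (\<forall>i < ncols. \<forall>j < ncols.
        pE $ i * u $ j + u $ i * pE $ j + qE $ i * v $ j + v $ i * qE $ j = 0)"
    unfolding u_def v_def by (rule transpose_mult_rank_two_update_iff[OF A_carrier sign_vec_carrier B])
  also have "\<dots> \<longleftrightarrow> (\<forall>j < ncols. u $ j = 0 \<and> v $ j = 0)"
  proof (rule rank_two_form_eq_0_iff_of_common_zero[where p = "($) pE" and q = "($) qE" and j\<^sub>0 = 0])
    show "u $ j = 0 \<or> v $ j = 0" if "j < ncols" for j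
      using that by (auto simp: u_def v_def transpose_A_plus_B_mult_xE transpose_A_plus_B_mult_yE)
    show "0 < ncols" "u $ 0 = 0" "v $ 0 = 0"
      using assms by (simp_all add: u_def v_def transpose_A_plus_B_mult_xE transpose_A_plus_B_mult_yE)
    show "pE $ 0 \<noteq> 0" "qE $ 0 \<noteq> 0"
      using sign_vecs_at_0[OF assms] by auto
  qed
  also have "\<dots> \<longleftrightarrow> equal_column_sums"
    unfolding u_def v_def by (rule transpose_A_plus_B_mult_xE_yE_eq_0_iff)
  finally show ?thesis .
qed

end

locale balanced_gram_mate_blocks = gram_mate_blocks +
  assumes k_pos: "k > 0" and l_pos: "l > 0" and abcd_pos: "a + b + c + d > 0"
    and balance_top: "a + b + e = c + d + f" and balance_bottom: "a + c + g = b + d + h"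
begin

lemma A_plus_B_mult_pE:
  "(A + B) *\<^sub>v pE = 0\<^sub>v (2 * k) @\<^sub>v (2 \<cdot>\<^sub>v Y_row_diff - (int e - int f) \<cdot>\<^sub>v ones (2 * l))"
    (is "_ = ?rhs")
proof (rule eq_vecI)
  have entries: "\<forall>i < k + k + (l + l).
    2 * (row A i \<bullet> pE) + xE $ i * (pE \<bullet> pE) + yE $ i * (qE \<bullet> pE) = ?rhs $ i"
    unfolding all_less_add_iff using balance_top
    by (simp add: A_def xE_def yE_def pE_def qE_def Y_row_diff_def)
  show "((A + B) *\<^sub>v pE) $ i = ?rhs $ i" if "i < dim_vec ?rhs" for i
  proof -
    have i: "i < nrows" and i': "i < k + k + (l + l)"
      using that by simp_all
    show ?thesis
      unfolding A_plus_B_mult_vec[OF sign_vec_carrier(3) i] using entries i' by blast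
  qed
qed (use A_carrier E_carrier in simp)

lemma A_plus_B_mult_qE:
  "(A + B) *\<^sub>v qE = (2 \<cdot>\<^sub>v X_row_diff - (int g - int h) \<cdot>\<^sub>v ones (2 * k)) @\<^sub>v 0\<^sub>v (2 * l)"
    (is "_ = ?rhs")
proof (rule eq_vecI)
  have entries: "\<forall>i < k + k + (l + l).
    2 * (row A i \<bullet> qE) + xE $ i * (pE \<bullet> qE) + yE $ i * (qE \<bullet> qE) = ?rhs $ i"
    unfolding all_less_add_iff using balance_bottom
    by (simp add: A_def xE_def yE_def pE_def qE_def X_row_diff_def)
  show "((A + B) *\<^sub>v qE) $ i = ?rhs $ i" if "i < dim_vec ?rhs" for i
  proof -
    have i: "i < nrows" and i': "i < k + k + (l + l)"
      using that by simp_all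
    show ?thesis
      unfolding A_plus_B_mult_vec[OF sign_vec_carrier(4) i] using entries i' by blast
  qed
qed (use A_carrier E_carrier in simp)

lemma gram_eq_iff_of_equal_column_sums:
  assumes equal_column_sums
  shows "A * transpose_mat A = B * transpose_mat B \<longleftrightarrow>
    2 \<cdot>\<^sub>v X_row_diff = (int g - int h) \<cdot>\<^sub>v ones (2 * k) \<and>
    2 \<cdot>\<^sub>v Y_row_diff = (int e - int f) \<cdot>\<^sub>v ones (2 * l)"
proof -
  define U where "U = (A + B) *\<^sub>v pE"
  define V where "V = (A + B) *\<^sub>v qE"
  have B: "B = A + rank_two_mat xE pE yE qE"
    by (simp add: E_eq_rank_two_mat)
  have "transpose_mat (A + B) *\<^sub>v xE = 0\<^sub>v ncols"
    using assms A_carrier E_carrier transpose_A_plus_B_mult_xE_yE_eq_0_iff by (auto simp: vec_eq_iff)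
  then have "xE \<bullet> V = 0"
    using transpose_vec_mult_scalar[of "A + B" nrows ncols qE xE]
      A_carrier E_carrier sign_vec_carrier by (simp add: V_def)
  then have sum_xV: "(\<Sum>i < nrows. xE $ i * V $ i) = 0"
    using sign_vec_carrier A_carrier E_carrier by (simp add: V_def scalar_prod_def lessThan_atLeast0)
  have "A * transpose_mat A = B * transpose_mat B \<longleftrightarrow>
      (\<forall>i < nrows. \<forall>j < nrows.
        xE $ i * U $ j + U $ i * xE $ j + yE $ i * V $ j + V $ i * yE $ j = 0)"
    unfolding U_def V_def by (rule mult_transpose_rank_two_update_iff[OF A_carrier sign_vec_carrier B])
  also have "\<dots> \<longleftrightarrow> (\<forall>i < nrows. U $ i = 0 \<and> V $ i = 0)"
  proof (rule rank_two_form_eq_0_iff_of_disjoint_supports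
      [where x = "($) xE" and y = "($) yE" and i\<^sub>0 = 0 and j\<^sub>0 = "2 * k", OF _ _ _ _ _ sum_xV])
    show "(xE $ i \<in> {-1, 1} \<and> yE $ i = 0 \<and> U $ i = 0) \<or> (yE $ i \<in> {-1, 1} \<and> xE $ i = 0 \<and> V $ i = 0)"
      if "i < nrows" for i
      using that by (auto simp: U_def V_def A_plus_B_mult_pE A_plus_B_mult_qE xE_def yE_def)
    show "0 < nrows" "xE $ 0 \<noteq> 0" "2 * k < nrows" "yE $ (2 * k) \<noteq> 0"
      using k_pos l_pos by (simp_all add: xE_def yE_def)
  qed
  also have "\<dots> \<longleftrightarrow> 2 \<cdot>\<^sub>v X_row_diff = (int g - int h) \<cdot>\<^sub>v ones (2 * k) \<and>
      2 \<cdot>\<^sub>v Y_row_diff = (int e - int f) \<cdot>\<^sub>v ones (2 * l)"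
    unfolding U_def V_def A_plus_B_mult_pE A_plus_B_mult_qE all_less_add_iff
    by (auto simp: vec_eq_iff X_row_diff_def Y_row_diff_def)
  finally show ?thesis .
qed

lemma gram_mates_iff:
  "gram_mates A B \<longleftrightarrow> equal_column_sums \<and> even (int g - int h) \<and> even (int e - int f) \<and>
    X_row_diff = ((int g - int h) div 2) \<cdot>\<^sub>v ones (2 * k) \<and>
    Y_row_diff = ((int e - int f) div 2) \<cdot>\<^sub>v ones (2 * l)"
proof -
  have "gram_mates A B \<longleftrightarrow>
      transpose_mat A * A = transpose_mat B * B \<and> A * transpose_mat A = B * transpose_mat B"
    using zero_one_mat_A zero_one_mat_B A_neq_B[OF k_pos abcd_pos] A_carrier E_carrier
    by (auto simp: gram_mates_def)
  moreover have "X_row_diff \<in> carrier_vec (2 * k)" "Y_row_diff \<in> carrier_vec (2 * l)"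
    by (auto intro!: carrier_vecI simp: X_row_diff_def Y_row_diff_def)
  ultimately show ?thesis
    using transpose_gram_eq_iff[OF abcd_pos] gram_eq_iff_of_equal_column_sums k_pos l_pos
      smult_two_eq_smult_ones_iff
    by auto
qed

end

theorem theorem4p15:
  fixes k l a b c d e f g h :: nat
    and X11 X12 X21 X22 Y11 Y12 Y21 Y22 :: "int mat"
  defines "n \<equiv> a + b + c + d + e + f + g + h"
    and "m \<equiv> 2 * k + 2 * l"
  defines "E \<equiv> vcats n
     [hcats k [Jm k a, Jm k b, - Jm k c, - Jm k d, Jm k e, - Jm k f, 0\<^sub>m k g, 0\<^sub>m k h],
      hcats k [- Jm k a, - Jm k b, Jm k c, Jm k d, - Jm k e, Jm k f, 0\<^sub>m k g, 0\<^sub>m k h],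
      hcats l [Jm l a, - Jm l b, Jm l c, - Jm l d, 0\<^sub>m l e, 0\<^sub>m l f, Jm l g, - Jm l h],
      hcats l [- Jm l a, Jm l b, - Jm l c, Jm l d, 0\<^sub>m l e, 0\<^sub>m l f, - Jm l g, Jm l h]]"
  defines "A \<equiv> vcats n
     [hcats k [0\<^sub>m k a, 0\<^sub>m k b, Jm k c, Jm k d, 0\<^sub>m k e, Jm k f, X11, X12],
      hcats k [Jm k a, Jm k b, 0\<^sub>m k c, 0\<^sub>m k d, Jm k e, 0\<^sub>m k f, X21, X22],
      hcats l [0\<^sub>m l a, Jm l b, 0\<^sub>m l c, Jm l d, Y11, Y12, 0\<^sub>m l g, Jm l h],
      hcats l [Jm l a, 0\<^sub>m l b, Jm l c, 0\<^sub>m l d, Y21, Y22, Jm l g, 0\<^sub>m l h]]"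
  assumes "k > 0" and "l > 0"
    and "a + b + c + d > 0" and "e + f > 0" and "g + h > 0"
    and "E *\<^sub>v ones n = 0\<^sub>v m"
    and "transpose_mat E *\<^sub>v ones m = 0\<^sub>v n"
    and "X11 \<in> carrier_mat k g" and "X12 \<in> carrier_mat k h"
    and "X21 \<in> carrier_mat k g" and "X22 \<in> carrier_mat k h"
    and "Y11 \<in> carrier_mat l e" and "Y12 \<in> carrier_mat l f"
    and "Y21 \<in> carrier_mat l e" and "Y22 \<in> carrier_mat l f"
    and "zero_one_mat X11" and "zero_one_mat X12"
    and "zero_one_mat X21" and "zero_one_mat X22"
    and "zero_one_mat Y11" and "zero_one_mat Y12"
    and "zero_one_mat Y21" and "zero_one_mat Y22"
  shows "gram_mates A (A + E) \<longleftrightarrow>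
    ( transpose_mat X11 *\<^sub>v ones k = transpose_mat X21 *\<^sub>v ones k
    \<and> transpose_mat X12 *\<^sub>v ones k = transpose_mat X22 *\<^sub>v ones k
    \<and> transpose_mat Y11 *\<^sub>v ones l = transpose_mat Y21 *\<^sub>v ones l
    \<and> transpose_mat Y12 *\<^sub>v ones l = transpose_mat Y22 *\<^sub>v ones l
    \<and> even (int g - int h) \<and> even (int e - int f)
    \<and> vcats (g + h) [hcats k [X11, X12], hcats k [X21, X22]] *\<^sub>v (ones g @\<^sub>v (- ones h))
        = ((int g - int h) div 2) \<cdot>\<^sub>v ones (2 * k)
    \<and> vcats (e + f) [hcats l [Y11, Y12], hcats l [Y21, Y22]] *\<^sub>v (ones e @\<^sub>v (- ones f))
        = ((int e - int f) div 2) \<cdot>\<^sub>v ones (2 * l))"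
proof -
  interpret blocks: gram_mate_blocks k l a b c d e f g h X11 X12 X21 X22 Y11 Y12 Y21 Y22
    using assms by unfold_locales
  have AE: "A = blocks.A" "E = blocks.E"
    unfolding A_def E_def n_def blocks.A_def blocks.E_def by simp_all
  have "a + b + e = c + d + f" "a + c + g = b + d + h"
    using blocks.E_mult_ones_eq_0_iff \<open>k > 0\<close> \<open>l > 0\<close> \<open>E *\<^sub>v ones n = 0\<^sub>v m\<close>
    unfolding AE m_def n_def by simp_all
  then interpret balanced_gram_mate_blocks k l a b c d e f g h X11 X12 X21 X22 Y11 Y12 Y21 Y22
    using assms by unfold_locales
  show ?thesis
    unfolding AE using gram_mates_iff
    by (simp add: blocks.equal_column_sums_def blocks.X_row_diff_def blocks.Y_row_diff_def)
qed

end
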